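(* Let $T$ be a trace (well formed, with a matching release for each acquire) and let $<$ be a strict partial order on $\mathrm{evts}(T)$ satisfying the MHB-Criteria. Then every predictable deadlock in $T$ for the lock set function $\mathrm{LH}_{<}$ is also a predictable deadlock in $T$ for the lock set function $\mathrm{LH}_T$; i.e. $\mathrm{PD}(\mathrm{LH}_{<})\subseteq\mathrm{PD}(\mathrm{LH}_T)$.
   Context: Events and traces. An event is a triple $e=(\alpha,t,op)$ with a unique identifier $\alpha$, a thread id $t$ and an operation $op$, which is one of $\mathit{rd}(x)$, $\mathit{wr}(x)$ (read/write of a shared variable $x$) or $\mathit{req}(l)$, $\mathit{acq}(l)$, $\mathit{rel}(l)$ (request, acquire, release of a lock $l$). Write $\mathrm{thd}(e)=t$. A trace is a finite list of events with distinct identifiers; $e\in T$ means $e$ occurs in $T$, $\mathrm{evts}(T)$ is its set of events, and $e<_T f$ means $e$ occurs at an earlier position than $f$ in $T$. An event $e$ is final in $T$ if there is no $f\in T$ with $e<_T f$ and $\mathrm{thd}(f)=\mathrm{thd}(e)$. Well formedness. $T$ is well formed if: (WF-Acq) for all $a=(t,\mathit{acq}(l))$, $a'=(t',\mathit{acq}(l))$ in $T$ with $a<_T a'$ there is $r=(t,\mathit{rel}(l))\in T$ with $a<_T r<_T a'$; (WF-Rel) for every $r=(t,\mathit{rel}(l))\in T$ there is $a=(t,\mathit{acq}(l))\in T$ with $a<_T r$ and no $r'=(t',\mathit{rel}(l))\in T$ with $a<_T r'<_T r$; (WF-Req) for every $a=(t,\mathit{acq}(l))\in T$ there is $q=(t,\mathit{req}(l))\in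 T$ with $q<_T a$ and no event of thread $t$ strictly between $q$ and $a$, and for every $q=(t,\mathit{req}(l))\in T$, the event of thread $t$ immediately following $q$ in $T$ (if any) is of the form $(t,\mathit{acq}(l))$. Standing assumption: $T$ is well formed and every acquire has a matching release in $T$. Correct reorderings. For a read $e=(\cdot,\mathit{rd}(x))\in T$, $\mathrm{lw}_T(e)$ is the write $f=(\cdot,\mathit{wr}(x))$ with $f<_T e$ and no write on $x$ strictly between them in $T$. A trace $T'$ is a correctly reordered prefix of $T$ if (CRP-WF) $T'$ is well formed and $\mathrm{evts}(T')\subseteq\mathrm{evts}(T)$; (CRP-PO) for every thread $t$ of $T'$, the subsequence of thread-$t$ events of $T'$ is a prefix of that of $T$; (CRP-LW) for every read $e\in T'$ with $f=\mathrm{lw}_T(e)$ we have $f=\mathrm{lw}_{T'}(e)$. $\mathrm{crp}(T)$ is the set of correctly reordered prefixes of $T$. Trace-based lock sets. Write $e\prec_T f$ if for every $T'\in\mathrm{crp}(T)$ with $f\in T'$ we have $e\in T'$ and $e<_{T'}f$. For $a=(t,\mathit{acq}(l))$, $r=(t,\mathit{rel}(l))\in T$, $e\in\mathrm{CS}_T(a,r)$ iff (CS-Enclosed) $a\prec_T e$ and $e\prec_T r$, and (CS-Match) there is no release $r'=(t,\mathit{rel}(l))\in T$ and $T'\in\mathrm{crp}(T)$ with $a<_{T'}r'<_{T'}e$. $\mathrm{LH}_T(e)=\{(l,t)\mid \exists a,r\in T,\ a=(t,\mathit{acq}(l)),\ e\in\mathrm{CS}_T(a,r)\}$. Partial-order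 lock sets. For a strict partial order $<$ on $\mathrm{evts}(T)$ and $a=(t,\mathit{acq}(l))$, $r=(t,\mathit{rel}(l))\in T$: $e\in\mathrm{CS}_{<}(a,r)$ iff (PO-CS-Enclosed) $a<e$ and $e<r$, and (PO-CS-Match) there is no release $r'=(t,\mathit{rel}(l))\in T$ and $T'\in\mathrm{crp}(T)$ with $a<_{T'}r'<_{T'}e$. $\mathrm{LH}_{<}(e)=\{(l,t)\mid \exists a,r\in T,\ a=(t,\mathit{acq}(l)),\ e\in\mathrm{CS}_{<}(a,r)\}$. The order $<$ satisfies the MHB-Criteria if whenever $e<f$, for every $T'\in\mathrm{crp}(T)$ with $f\in T'$ we have $e\in T'$ and $e<_{T'}f$. Deadlock patterns. A lock set function $L$ maps events of $T$ to sets of pairs (lock, thread id). Write $l\in L(e)$ if $(l,t)\in L(e)$ for some $t$. For such sets $M,N$ let $M\Cap N=\{l\mid (l,s)\in M,(l,t)\in N, s\neq t\}$. For $n>1$ and request events $q_i=(t_i,\mathit{req}(l_i))\in T$, the set $\{q_1,\dots,q_n\}$ is a deadlock pattern for $L$ if (DP-Thread) $\mathrm{thd}(q_i)\ne\mathrm{thd}(q_j)$ for $i\ne j$; (DP-Cycle) $l_i\in L(q_{(i \bmod n)+1})$ for every $i$; (DP-Guard) $L(q_i)\Cap L(q_j)=\emptyset$ for $i\neq j$. It is a predictable deadlock for $L$ if in addition there is a witness $T'\in\mathrm{crp}(T)$ in which each $q_i$ is final. $\mathrm{PD}(L)$ denotes the set of predictable deadlocks in $T$ for $L$. *)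

theory Defs
  imports Main "HOL-Library.Sublist"
begin

datatype ('v, 'l) operation = Rd 'v | Wr 'v | Req 'l | Acq 'l | Rel 'l

datatype ('t, 'v, 'l) event = Event (eid: nat) (thd: 't) (op: "('v, 'l) operation")

type_synonym ('t, 'v, 'l) trace = "('t, 'v, 'l) event list"

definition is_trace :: "('t, 'v, 'l) trace \<Rightarrow> bool" where
  "is_trace T \<longleftrightarrow> distinct (map eid T)"

definition before :: "('t, 'v, 'l) trace \<Rightarrow> ('t, 'v, 'l) event \<Rightarrow> ('t, 'v, 'l) event \<Rightarrow> bool" where
  "before T e f \<longleftrightarrow> (\<exists>i j. i < j \<and> j < length T \<and> T ! i = e \<and> T ! j = f)"

definition final :: "('t, 'v, 'l) trace \<Rightarrow> ('t, 'v, 'l) event \<Rightarrow> bool" where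
  "final T e \<longleftrightarrow> e \<in> set T \<and> \<not> (\<exists>f \<in> set T. before T e f \<and> thd f = thd e)"

definition wf_acq :: "('t, 'v, 'l) trace \<Rightarrow> bool" where
  "wf_acq T \<longleftrightarrow> (\<forall>a \<in> set T. \<forall>a' \<in> set T. \<forall>l.
      op a = Acq l \<and> op a' = Acq l \<and> before T a a' \<longrightarrow>
      (\<exists>r \<in> set T. thd r = thd a \<and> op r = Rel l \<and> before T a r \<and> before T r a'))"

definition wf_rel :: "('t, 'v, 'l) trace \<Rightarrow> bool" where
  "wf_rel T \<longleftrightarrow> (\<forall>r \<in> set T. \<forall>l. op r = Rel l \<longrightarrow>
      (\<exists>a \<in> set T. thd a = thd r \<and> op a = Acq l \<and> before T a r \<and>
         \<not> (\<exists>r' \<in> set T. op r' = Rel l \<and> before T a r' \<and> before T r' r)))"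

definition wf_req :: "('t, 'v, 'l) trace \<Rightarrow> bool" where
  "wf_req T \<longleftrightarrow>
    (\<forall>a \<in> set T. \<forall>l. op a = Acq l \<longrightarrow>
      (\<exists>q \<in> set T. thd q = thd a \<and> op q = Req l \<and> before T q a \<and>
         \<not> (\<exists>g \<in> set T. thd g = thd a \<and> before T q g \<and> before T g a))) \<and>
    (\<forall>q \<in> set T. \<forall>l. op q = Req l \<longrightarrow>
      (\<forall>f \<in> set T. thd f = thd q \<and> before T q f \<and>
         \<not> (\<exists>g \<in> set T. thd g = thd q \<and> before T q g \<and> before T g f) \<longrightarrow>
         op f = Acq l))"

definition well_formed :: "('t, 'v, 'l) trace \<Rightarrow> bool" where
  "well_formed T \<longleftrightarrow> is_trace T \<and> wf_acq T \<and> wf_rel T \<and> wf_req T"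

definition acq_matched :: "('t, 'v, 'l) trace \<Rightarrow> bool" where
  "acq_matched T \<longleftrightarrow> (\<forall>a \<in> set T. \<forall>l. op a = Acq l \<longrightarrow>
      (\<exists>r \<in> set T. thd r = thd a \<and> op r = Rel l \<and> before T a r \<and>
         \<not> (\<exists>r' \<in> set T. op r' = Rel l \<and> before T a r' \<and> before T r' r)))"

definition is_lw :: "('t, 'v, 'l) trace \<Rightarrow> ('t, 'v, 'l) event \<Rightarrow> ('t, 'v, 'l) event \<Rightarrow> bool" where
  "is_lw T e f \<longleftrightarrow> (\<exists>x. op e = Rd x \<and> op f = Wr x \<and> f \<in> set T \<and> e \<in> set T \<and> before T f e \<and>
      \<not> (\<exists>g \<in> set T. op g = Wr x \<and> before T f g \<and> before T g e))"

definition thread_proj :: "'t \<Rightarrow> ('t, 'v, 'l) trace \<Rightarrow> ('t, 'v, 'l) trace" where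
  "thread_proj t T = filter (\<lambda>e. thd e = t) T"

definition crp :: "('t, 'v, 'l) trace \<Rightarrow> ('t, 'v, 'l) trace set" where
  "crp T = {T'. well_formed T' \<and> set T' \<subseteq> set T \<and>
      (\<forall>t \<in> thd ` set T'. prefix (thread_proj t T') (thread_proj t T)) \<and>
      (\<forall>e \<in> set T'. \<forall>f. (\<exists>x. op e = Rd x) \<and> is_lw T e f \<longrightarrow> is_lw T' e f)}"

definition must_before :: "('t, 'v, 'l) trace \<Rightarrow> ('t, 'v, 'l) event \<Rightarrow> ('t, 'v, 'l) event \<Rightarrow> bool" where
  "must_before T e f \<longleftrightarrow> (\<forall>T' \<in> crp T. f \<in> set T' \<longrightarrow> e \<in> set T' \<and> before T' e f)"

definition cs_match :: "('t, 'v, 'l) trace \<Rightarrow> ('t, 'v, 'l) event \<Rightarrow> 'l \<Rightarrow> ('t, 'v, 'l) event \<Rightarrow> bool" where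
  "cs_match T a l e \<longleftrightarrow> \<not> (\<exists>r' \<in> set T. \<exists>T' \<in> crp T. thd r' = thd a \<and> op r' = Rel l \<and>
      before T' a r' \<and> before T' r' e)"

definition CS_T :: "('t, 'v, 'l) trace \<Rightarrow> ('t, 'v, 'l) event \<Rightarrow> ('t, 'v, 'l) event \<Rightarrow> ('t, 'v, 'l) event set" where
  "CS_T T a r = {e. must_before T a e \<and> must_before T e r \<and>
      (\<forall>l. op a = Acq l \<longrightarrow> cs_match T a l e)}"

definition LH_T :: "('t, 'v, 'l) trace \<Rightarrow> ('t, 'v, 'l) event \<Rightarrow> ('l \<times> 't) set" where
  "LH_T T e = {(l, t). \<exists>a \<in> set T. \<exists>r \<in> set T. thd a = t \<and> op a = Acq l \<and>
      thd r = t \<and> op r = Rel l \<and> e \<in> CS_T T a r}"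

definition CS_po :: "('t, 'v, 'l) trace \<Rightarrow> (('t, 'v, 'l) event \<Rightarrow> ('t, 'v, 'l) event \<Rightarrow> bool)
    \<Rightarrow> ('t, 'v, 'l) event \<Rightarrow> ('t, 'v, 'l) event \<Rightarrow> ('t, 'v, 'l) event set" where
  "CS_po T R a r = {e. R a e \<and> R e r \<and> (\<forall>l. op a = Acq l \<longrightarrow> cs_match T a l e)}"

definition LH_po :: "('t, 'v, 'l) trace \<Rightarrow> (('t, 'v, 'l) event \<Rightarrow> ('t, 'v, 'l) event \<Rightarrow> bool)
    \<Rightarrow> ('t, 'v, 'l) event \<Rightarrow> ('l \<times> 't) set" where
  "LH_po T R e = {(l, t). \<exists>a \<in> set T. \<exists>r \<in> set T. thd a = t \<and> op a = Acq l \<and>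
      thd r = t \<and> op r = Rel l \<and> e \<in> CS_po T R a r}"

definition strict_po_on :: "('t, 'v, 'l) trace \<Rightarrow> (('t, 'v, 'l) event \<Rightarrow> ('t, 'v, 'l) event \<Rightarrow> bool) \<Rightarrow> bool" where
  "strict_po_on T R \<longleftrightarrow> (\<forall>e f. R e f \<longrightarrow> e \<in> set T \<and> f \<in> set T) \<and>
      (\<forall>e. \<not> R e e) \<and> (\<forall>e f g. R e f \<and> R f g \<longrightarrow> R e g)"

definition mhb_criteria :: "('t, 'v, 'l) trace \<Rightarrow> (('t, 'v, 'l) event \<Rightarrow> ('t, 'v, 'l) event \<Rightarrow> bool) \<Rightarrow> bool" where
  "mhb_criteria T R \<longleftrightarrow> (\<forall>e f. R e f \<longrightarrow> must_before T e f)"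

definition lock_inter :: "('l \<times> 't) set \<Rightarrow> ('l \<times> 't) set \<Rightarrow> 'l set" where
  "lock_inter M N = {l. \<exists>s t. (l, s) \<in> M \<and> (l, t) \<in> N \<and> s \<noteq> t}"

definition lock_in :: "'l \<Rightarrow> ('l \<times> 't) set \<Rightarrow> bool" where
  "lock_in l M \<longleftrightarrow> (\<exists>t. (l, t) \<in> M)"

text \<open>Deadlock pattern given by an enumeration q_0 .. q_(n-1) (0-based indices),
  with request locks ls.\<close>
definition deadlock_pattern :: "('t, 'v, 'l) trace \<Rightarrow> (('t, 'v, 'l) event \<Rightarrow> ('l \<times> 't) set)
    \<Rightarrow> ('t, 'v, 'l) event list \<Rightarrow> bool" where
  "deadlock_pattern T L qs \<longleftrightarrow> (let n = length qs in
     n > 1 \<and>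
     (\<exists>ls :: 'l list. length ls = n \<and>
        (\<forall>i < n. qs ! i \<in> set T \<and> op (qs ! i) = Req (ls ! i)) \<and>
        (\<forall>i < n. \<forall>j < n. i \<noteq> j \<longrightarrow> thd (qs ! i) \<noteq> thd (qs ! j)) \<and>
        (\<forall>i < n. lock_in (ls ! i) (L (qs ! (Suc i mod n)))) \<and>
        (\<forall>i < n. \<forall>j < n. i \<noteq> j \<longrightarrow> lock_inter (L (qs ! i)) (L (qs ! j)) = {})))"

definition predictable_deadlock :: "('t, 'v, 'l) trace \<Rightarrow> (('t, 'v, 'l) event \<Rightarrow> ('l \<times> 't) set)
    \<Rightarrow> ('t, 'v, 'l) event list \<Rightarrow> bool" where
  "predictable_deadlock T L qs \<longleftrightarrow> deadlock_pattern T L qs \<and>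
     (\<exists>T' \<in> crp T. \<forall>q \<in> set qs. final T' q)"

definition PD :: "('t, 'v, 'l) trace \<Rightarrow> (('t, 'v, 'l) event \<Rightarrow> ('l \<times> 't) set)
    \<Rightarrow> ('t, 'v, 'l) event set set" where
  "PD T L = {set qs | qs. predictable_deadlock T L qs}"

end

theory Submission
  imports Defs
begin

text \<open>The MHB-Criteria give \<open>LH\<^sub><(e) \<subseteq> LH\<^sub>T(e)\<close>, so the cycle condition carries over
  from \<open>LH\<^sub><\<close> to \<open>LH\<^sub>T\<close>. The guard condition for \<open>LH\<^sub>T\<close> holds at every witness \<open>T'\<close> of a
  predictable deadlock, independently of the one for \<open>LH\<^sub><\<close>: if \<open>(l, s) \<in> LH\<^sub>T(q)\<close> for a final
  request \<open>q\<close> of \<open>T'\<close>, then the acquire of \<open>l\<close> by \<open>s\<close> occurs in \<open>T'\<close> and is not released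
  there, for otherwise moving \<open>q\<close> to the end of \<open>T'\<close> yields a correctly reordered prefix
  with that release between the acquire and \<open>q\<close>, contradicting CS-Match. By well-formedness
  of \<open>T'\<close>, two distinct threads cannot both hold \<open>l\<close> at the end of \<open>T'\<close>.\<close>

lemma before_Nil [simp]: "\<not> before [] x y"
  by (simp add: before_def)

lemma before_Cons: "before (z # xs) x y \<longleftrightarrow> z = x \<and> y \<in> set xs \<or> before xs x y"
proof
  assume "before (z # xs) x y"
  then obtain i j where ij: "i < j" "j < length (z # xs)" "(z # xs) ! i = x" "(z # xs) ! j = y"
    by (auto simp: before_def)
  show "z = x \<and> y \<in> set xs \<or> before xs x y"
  proof (cases i)
    case 0
    with ij show ?thesis by (cases j) auto
  next
    case (Suc i')
    with ij obtain j' where "j = Suc j'" by (cases j) auto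
    with ij Suc have "before xs x y" unfolding before_def by auto
    then show ?thesis ..
  qed
next
  assume "z = x \<and> y \<in> set xs \<or> before xs x y"
  then show "before (z # xs) x y"
  proof
    assume "z = x \<and> y \<in> set xs"
    then obtain j where "j < length xs" "xs ! j = y" "z = x" by (auto simp: in_set_conv_nth)
    then show ?thesis unfolding before_def by (intro exI[of _ 0] exI[of _ "Suc j"]) auto
  next
    assume "before xs x y"
    then obtain i j where "i < j" "j < length xs" "xs ! i = x" "xs ! j = y"
      by (auto simp: before_def)
    then show ?thesis unfolding before_def by (intro exI[of _ "Suc i"] exI[of _ "Suc j"]) auto
  qed
qed

lemma before_append:
  "before (xs @ ys) x y \<longleftrightarrow> before xs x y \<or> x \<in> set xs \<and> y \<in> set ys \<or> before ys x y"
  by (induction xs) (auto simp: before_Cons)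

lemma before_imp_mem: "before xs x y \<Longrightarrow> x \<in> set xs \<and> y \<in> set xs"
  by (induction xs) (auto simp: before_Cons)

lemma before_total: "x \<in> set xs \<Longrightarrow> y \<in> set xs \<Longrightarrow> x \<noteq> y \<Longrightarrow> before xs x y \<or> before xs y x"
  by (induction xs) (auto simp: before_Cons)

lemma before_remove1_snoc:
  assumes "distinct xs"
  shows "before (remove1 q xs @ [q]) x y \<longleftrightarrow>
    before xs x y \<and> x \<noteq> q \<and> y \<noteq> q \<or> x \<in> set xs \<and> x \<noteq> q \<and> y = q"
proof (cases "q \<in> set xs")
  case True
  then obtain us vs where xs: "xs = us @ q # vs" by (meson split_list)
  with assms have "q \<notin> set us" "q \<notin> set vs" by auto
  then have "remove1 q xs = us @ vs" by (simp add: xs remove1_append)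
  then show ?thesis using \<open>q \<notin> set us\<close> \<open>q \<notin> set vs\<close> unfolding xs
    by (auto simp: before_append before_Cons dest: before_imp_mem)
next
  case False
  then show ?thesis by (auto simp: remove1_idem before_append before_Cons dest: before_imp_mem)
qed

lemma before_remove1_snoc_other:
  "distinct xs \<Longrightarrow> x \<noteq> q \<Longrightarrow> y \<noteq> q \<Longrightarrow> before (remove1 q xs @ [q]) x y \<longleftrightarrow> before xs x y"
  by (simp add: before_remove1_snoc)

lemma final_imp_before:
  "final xs q \<Longrightarrow> x \<in> set xs \<Longrightarrow> thd x = thd q \<Longrightarrow> x \<noteq> q \<Longrightarrow> before xs x q"
  unfolding final_def using before_total by blast

lemma before_remove1_snoc_same_thread:
  assumes "distinct xs" "final xs q" "thd x = thd y"
  shows "before (remove1 q xs @ [q]) x y \<longleftrightarrow> before xs x y"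
proof -
  have "\<not> before xs q z" if "thd z = thd q" for z
    using assms(2) that by (auto simp: final_def dest: before_imp_mem)
  then show ?thesis
    using assms final_imp_before[OF assms(2), of x]
    by (auto simp: before_remove1_snoc dest: before_imp_mem)
qed

lemma set_remove1_snoc: "distinct xs \<Longrightarrow> q \<in> set xs \<Longrightarrow> set (remove1 q xs @ [q]) = set xs"
  by (auto simp: set_remove1_eq)

lemma thread_proj_remove1_snoc:
  assumes "distinct xs" "final xs q"
  shows "thread_proj t (remove1 q xs @ [q]) = thread_proj t xs"
proof -
  from assms obtain us vs where xs: "xs = us @ q # vs" and "q \<notin> set us"
    by (metis final_def split_list_first)
  have "before xs q e" if "e \<in> set vs" for e
    using that by (simp add: xs before_append before_Cons)
  then have "filter (\<lambda>e. thd e = thd q) vs = []"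
    using assms(2) by (auto simp: filter_empty_conv final_def xs)
  with \<open>q \<notin> set us\<close> show ?thesis
    unfolding thread_proj_def xs by (cases "thd q = t") (auto simp: remove1_append)
qed

lemma wf_req_if_same_thread_order:
  assumes wf: "wf_req xs" and set_eq: "set ys = set xs"
    and order: "\<And>x y. thd x = thd y \<Longrightarrow> before ys x y \<longleftrightarrow> before xs x y"
  shows "wf_req ys"
  unfolding wf_req_def set_eq
proof (intro conjI ballI allI impI)
  fix a l assume "a \<in> set xs" "op a = Acq l"
  with wf obtain q where "q \<in> set xs" "thd q = thd a" "op q = Req l" "before xs q a"
    "\<not> (\<exists>g \<in> set xs. thd g = thd a \<and> before xs q g \<and> before xs g a)"
    unfolding wf_req_def by blast
  then show "\<exists>q \<in> set xs. thd q = thd a \<and> op q = Req l \<and> before ys q a \<and>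
      \<not> (\<exists>g \<in> set xs. thd g = thd a \<and> before ys q g \<and> before ys g a)"
    using order by (intro bexI[of _ q]) auto
next
  fix q l f assume "q \<in> set xs" "op q = Req l" "f \<in> set xs"
    "thd f = thd q \<and> before ys q f \<and>
      \<not> (\<exists>g \<in> set xs. thd g = thd q \<and> before ys q g \<and> before ys g f)"
  then have "thd f = thd q \<and> before xs q f \<and>
      \<not> (\<exists>g \<in> set xs. thd g = thd q \<and> before xs q g \<and> before xs g f)"
    using order by auto
  with wf \<open>q \<in> set xs\<close> \<open>op q = Req l\<close> \<open>f \<in> set xs\<close> show "op f = Acq l"
    unfolding wf_req_def by blast
qed

lemma wf_acq_remove1_snoc:
  assumes "distinct xs" "q \<in> set xs" "op q = Req l" "wf_acq xs"
  shows "wf_acq (remove1 q xs @ [q])"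
  unfolding wf_acq_def set_remove1_snoc[OF assms(1,2)]
proof (intro ballI allI impI)
  fix a a' l' assume a: "a \<in> set xs" "a' \<in> set xs"
    "op a = Acq l' \<and> op a' = Acq l' \<and> before (remove1 q xs @ [q]) a a'"
  then have "a \<noteq> q" "a' \<noteq> q" using assms(3) by auto
  with a assms(1) have "before xs a a'" by (simp add: before_remove1_snoc_other)
  with a assms(4) obtain r where "r \<in> set xs" "thd r = thd a" "op r = Rel l'"
    "before xs a r" "before xs r a'"
    unfolding wf_acq_def by blast
  moreover have "r \<noteq> q" using \<open>op r = Rel l'\<close> assms(3) by auto
  ultimately show "\<exists>r \<in> set xs. thd r = thd a \<and> op r = Rel l' \<and>
      before (remove1 q xs @ [q]) a r \<and> before (remove1 q xs @ [q]) r a'"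
    using \<open>a \<noteq> q\<close> \<open>a' \<noteq> q\<close> assms(1) by (auto simp: before_remove1_snoc_other)
qed

lemma wf_rel_remove1_snoc:
  assumes "distinct xs" "q \<in> set xs" "op q = Req l" "wf_rel xs"
  shows "wf_rel (remove1 q xs @ [q])"
  unfolding wf_rel_def set_remove1_snoc[OF assms(1,2)]
proof (intro ballI allI impI)
  fix r l' assume r: "r \<in> set xs" "op r = Rel l'"
  with assms(4) obtain a where a: "a \<in> set xs" "thd a = thd r" "op a = Acq l'" "before xs a r"
    "\<not> (\<exists>r' \<in> set xs. op r' = Rel l' \<and> before xs a r' \<and> before xs r' r)"
    unfolding wf_rel_def by blast
  have "a \<noteq> q" "r \<noteq> q" "\<forall>r'. op r' = Rel l' \<longrightarrow> r' \<noteq> q" using a r assms(3) by auto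
  with a assms(1) show "\<exists>a \<in> set xs. thd a = thd r \<and> op a = Acq l' \<and>
      before (remove1 q xs @ [q]) a r \<and>
      \<not> (\<exists>r' \<in> set xs. op r' = Rel l' \<and> before (remove1 q xs @ [q]) a r' \<and>
        before (remove1 q xs @ [q]) r' r)"
    by (auto simp: before_remove1_snoc_other)
qed

lemma is_lw_remove1_snoc:
  assumes "distinct xs" "q \<in> set xs" "op q = Req l" "is_lw xs e f"
  shows "is_lw (remove1 q xs @ [q]) e f"
proof -
  have "e \<noteq> q" "f \<noteq> q" "\<forall>g x. op g = Wr x \<longrightarrow> g \<noteq> q"
    using assms(3,4) by (auto simp: is_lw_def)
  with assms show ?thesis
    unfolding is_lw_def set_remove1_snoc[OF assms(1,2)] by (auto simp: before_remove1_snoc_other)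
qed

lemma crp_move_final_request_to_end:
  assumes crp: "T' \<in> crp T" and final: "final T' q" and req: "op q = Req l"
  shows "remove1 q T' @ [q] \<in> crp T"
proof -
  from crp have wf: "well_formed T'" and sub: "set T' \<subseteq> set T"
    and proj: "\<forall>t \<in> thd ` set T'. prefix (thread_proj t T') (thread_proj t T)"
    and lw: "\<forall>e \<in> set T'. \<forall>f. (\<exists>x. op e = Rd x) \<and> is_lw T e f \<longrightarrow> is_lw T' e f"
    by (auto simp: crp_def)
  have "distinct (map eid T')" using wf by (simp add: well_formed_def is_trace_def)
  then have dist: "distinct T'" and inj: "inj_on eid (set T')" by (simp_all add: distinct_map)
  have q: "q \<in> set T'" using final by (simp add: final_def)
  note set_eq = set_remove1_snoc[OF dist q]
  have "distinct (remove1 q T' @ [q])" using dist by (simp add: set_remove1_eq)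
  with inj set_eq have "is_trace (remove1 q T' @ [q])"
    unfolding is_trace_def by (metis distinct_map)
  moreover have "wf_acq (remove1 q T' @ [q])" "wf_rel (remove1 q T' @ [q])"
    using wf_acq_remove1_snoc[OF dist q req] wf_rel_remove1_snoc[OF dist q req] wf
    by (simp_all add: well_formed_def)
  moreover have "wf_req (remove1 q T' @ [q])"
    using wf_req_if_same_thread_order set_eq before_remove1_snoc_same_thread[OF dist final] wf
    unfolding well_formed_def by blast
  ultimately show ?thesis
    using sub proj lw set_eq is_lw_remove1_snoc[OF dist q req]
    by (simp add: crp_def well_formed_def thread_proj_remove1_snoc[OF dist final])
qed

definition holds_at_end :: "('t, 'v, 'l) trace \<Rightarrow> 't \<Rightarrow> 'l \<Rightarrow> bool" where
  "holds_at_end T t l \<longleftrightarrow> (\<exists>a \<in> set T. thd a = t \<and> op a = Acq l \<and>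
      \<not> (\<exists>r \<in> set T. thd r = t \<and> op r = Rel l \<and> before T a r))"

lemma holds_at_end_unique:
  assumes "wf_acq T" "holds_at_end T s l" "holds_at_end T t l"
  shows "s = t"
proof (rule ccontr)
  assume "s \<noteq> t"
  obtain a where a: "a \<in> set T" "thd a = s" "op a = Acq l"
    "\<not> (\<exists>r \<in> set T. thd r = s \<and> op r = Rel l \<and> before T a r)"
    using assms(2) by (auto simp: holds_at_end_def)
  obtain b where b: "b \<in> set T" "thd b = t" "op b = Acq l"
    "\<not> (\<exists>r \<in> set T. thd r = t \<and> op r = Rel l \<and> before T b r)"
    using assms(3) by (auto simp: holds_at_end_def)
  have "a \<noteq> b" using a b \<open>s \<noteq> t\<close> by auto
  then have "before T a b \<or> before T b a" using before_total a b by blast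
  with assms(1) a b show False unfolding wf_acq_def by blast
qed

lemma LH_T_final_request_holds_at_end:
  assumes crp: "T' \<in> crp T" and final: "final T' q" and req: "op q = Req l'"
    and held: "(l, s) \<in> LH_T T q"
  shows "holds_at_end T' s l"
proof -
  obtain a r where a: "thd a = s" "op a = Acq l" and cs: "q \<in> CS_T T a r"
    using held by (auto simp: LH_T_def)
  have "q \<in> set T'" using final by (simp add: final_def)
  with cs crp have "a \<in> set T'" by (auto simp: CS_T_def must_before_def)
  moreover have "\<not> before T' a r'" if r': "r' \<in> set T'" "thd r' = s" "op r' = Rel l" for r'
  proof
    assume "before T' a r'"
    let ?T'' = "remove1 q T' @ [q]"
    have "distinct T'"
      using crp by (simp add: crp_def well_formed_def is_trace_def distinct_map)
    moreover have "a \<noteq> q" "r' \<noteq> q" using a r' req by auto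
    ultimately have "before ?T'' a r'" "before ?T'' r' q"
      using \<open>before T' a r'\<close> r' by (simp_all add: before_remove1_snoc)
    moreover have "?T'' \<in> crp T" using crp_move_final_request_to_end[OF crp final req] .
    moreover have "r' \<in> set T" using r' crp by (auto simp: crp_def)
    ultimately show False
      using cs a r' by (auto simp: CS_T_def cs_match_def)
  qed
  ultimately show ?thesis using a by (auto simp: holds_at_end_def)
qed

lemma lock_inter_LH_T_final_requests:
  assumes crp: "T' \<in> crp T"
    and "final T' q\<^sub>1" "op q\<^sub>1 = Req l\<^sub>1" and "final T' q\<^sub>2" "op q\<^sub>2 = Req l\<^sub>2"
  shows "lock_inter (LH_T T q\<^sub>1) (LH_T T q\<^sub>2) = {}"
proof -
  have "wf_acq T'" using crp by (simp add: crp_def well_formed_def)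
  then have "s = t" if "(l, s) \<in> LH_T T q\<^sub>1" "(l, t) \<in> LH_T T q\<^sub>2" for l s t
    using holds_at_end_unique LH_T_final_request_holds_at_end[OF crp] assms(2-5) that by metis
  then show ?thesis by (auto simp: lock_inter_def)
qed

lemma LH_po_subset_LH_T: "mhb_criteria T R \<Longrightarrow> LH_po T R e \<subseteq> LH_T T e"
  unfolding LH_po_def LH_T_def CS_po_def CS_T_def mhb_criteria_def by blast

lemma predictable_deadlock_LH_T_if_subset:
  assumes subset: "\<And>e. L e \<subseteq> LH_T T e" and pd: "predictable_deadlock T L qs"
  shows "predictable_deadlock T (LH_T T) qs"
proof -
  obtain T' where T': "T' \<in> crp T" "\<forall>q \<in> set qs. final T' q"
    using pd by (auto simp: predictable_deadlock_def)
  obtain ls where ls: "length qs > 1" "length ls = length qs"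
    "\<forall>i < length qs. qs ! i \<in> set T \<and> op (qs ! i) = Req (ls ! i)"
    "\<forall>i < length qs. \<forall>j < length qs. i \<noteq> j \<longrightarrow> thd (qs ! i) \<noteq> thd (qs ! j)"
    "\<forall>i < length qs. lock_in (ls ! i) (L (qs ! (Suc i mod length qs)))"
    using pd by (auto simp: predictable_deadlock_def deadlock_pattern_def Let_def)
  have "\<forall>i < length qs. lock_in (ls ! i) (LH_T T (qs ! (Suc i mod length qs)))"
    using ls(5) subset unfolding lock_in_def by blast
  moreover have "\<forall>i < length qs. \<forall>j < length qs.
      lock_inter (LH_T T (qs ! i)) (LH_T T (qs ! j)) = {}"
    using lock_inter_LH_T_final_requests[OF T'(1)] T'(2) ls(3) by (meson nth_mem)
  ultimately show ?thesis
    using ls T' by (auto simp: predictable_deadlock_def deadlock_pattern_def Let_def)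
qed

theorem lemma6p6:
  fixes T :: "('t, 'v, 'l) trace"
    and R :: "('t, 'v, 'l) event \<Rightarrow> ('t, 'v, 'l) event \<Rightarrow> bool"
  assumes "well_formed T"
    and "acq_matched T"
    and "strict_po_on T R"
    and "mhb_criteria T R"
  shows "PD T (LH_po T R) \<subseteq> PD T (LH_T T)"
proof
  fix X assume "X \<in> PD T (LH_po T R)"
  then obtain qs where "X = set qs" "predictable_deadlock T (LH_po T R) qs"
    by (auto simp: PD_def)
  with predictable_deadlock_LH_T_if_subset[OF LH_po_subset_LH_T[OF assms(4)]]
  show "X \<in> PD T (LH_T T)" by (auto simp: PD_def)
qed

end
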